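(* Assume the penalty is $D(\hat\mu,P_{s,a})=\sup_{V\in\mathbb R^{\mathcal S}}\big(-\sigma(P_{s,a},V)-\mathbb E_{s'\sim\hat\mu}V(s')\big)$ for all $s,a$ and $\hat\mu\in\Delta(\mathcal S)$. Then for every stationary policy $\pi$, $$\overline V^\star=\widetilde V^\star,\quad \overline V^\pi=\widetilde V^\pi,\quad \overline Q^\star=\widetilde Q^\star,\quad \overline Q^\pi=\widetilde Q^\pi.$$ Writing $V^\star,V^\pi$ for these common values, for every initial state the supremum–infimum defining $\overline V^\star$ is attained by choosing actions via the deterministic stationary policy $\pi^\star(s)\in\arg\max_a\big(r(s,a)-\gamma\sigma(P_{s,a},V^\star)\big)$ and the stationary transition kernel (the same at every time $t$) $\hat P^\star_{s,a}\in\arg\min_{\hat\mu\in\Delta(\mathcal S)}\big(D(\hat\mu,P_{s,a})+\mathbb E_{s'\sim\hat\mu}V^\star(s')\big)$; and the infimum defining $\overline V^\pi$ is attained by the stationary kernel $\hat P^\pi_{s,a}\in\arg\min_{\hat\mu\in\Delta(\mathcal S)}\big(D(\hat\mu,P_{s,a})+\mathbb E_{s'\sim\hat\mu}V^\pi(s')\big)$ used at every time $t$.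
   Context: $\mathcal S$ and $\mathcal A$ are finite sets; $\Delta(\mathcal X)$ denotes the probability simplex over a finite set $\mathcal X$. $P=\{P_{s,a}\}$ with $P_{s,a}\in\Delta(\mathcal S)$ is the nominal transition kernel, $r:\mathcal S\times\mathcal A\to[0,1]$, $\gamma\in[0,1)$. A stationary policy is a map $\pi:\mathcal S\to\Delta(\mathcal A)$. A function $\sigma:\mathbb R^{\mathcal S}\to\mathbb R$ is a convex risk measure if (i) $V'\le V$ pointwise implies $\sigma(V)\le\sigma(V')$; (ii) $\sigma(V+m)=\sigma(V)-m$ for every constant $m$; (iii) $\sigma$ is convex. For each $(s,a)$ a convex risk measure $\sigma(P_{s,a},\cdot)$ is given. It is known (dual representation) that with $D$ as in the claim, $\sigma(P_{s,a},V)=\sup_{\hat\mu\in\Delta(\mathcal S)}(-\mathbb E_{\hat\mu}V-D(\hat\mu,P_{s,a}))$, and $D(\cdot,P_{s,a})$ is convex and lower semicontinuous. Risk-sensitive values: $\widetilde V^\pi$ is the unique solution of $\widetilde V^\pi(s)=\sum_a\pi(a|s)(r(s,a)-\gamma\sigma(P_{s,a},\widetilde V^\pi))$, $\widetilde V^\star$ the unique solution of $\widetilde V^\star(s)=\max_a(r(s,a)-\gamma\sigma(P_{s,a},\widetilde V^\star))$, $\widetilde Q^\pi(s,a)=r(s,a)-\gamma\sigma(P_{s,a},\widetilde V^\pi)$, $\widetilde Q^\star(s,a)=r(s,a)-\gamma\sigma(P_{s,a},\widetilde V^\star)$. Regularized robust values: an adversary picks a sequence $\{\hat P_t\}_{t\ge0}$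 of (time-dependent) transition kernels $\hat P_{t;s,a}\in\Delta(\mathcal S)$; trajectories evolve by $s_{t+1}\sim\hat P_{t;s_t,a_t}$. Then $\overline V^\pi(s)=\inf_{\{\hat P_t\}}\mathbb E\big[\sum_{t\ge0}\gamma^t\big(r(s_t,a_t)+\gamma D(\hat P_{t;s_t,a_t},P_{s_t,a_t})\big)\mid s_0=s\big]$ with $a_t\sim\pi(\cdot|s_t)$; $\overline V^\star(s)$ is the same expression with $\sup$ over all (possibly history-dependent) action choices $\{a_t\}_{t\ge0}$ placed before the $\inf$; $\overline Q^\pi(s,a)$ and $\overline Q^\star(s,a)$ are defined identically but with $a_0=a$ fixed (and actions $a_t$, $t\ge1$, drawn from $\pi$, resp. supremized). *)

theory Defs
  imports "HOL-Probability.Probability"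
begin

definition pexp :: "'s::finite pmf \<Rightarrow> ('s \<Rightarrow> real) \<Rightarrow> real" where
  "pexp \<mu> V = (\<Sum>x\<in>UNIV. pmf \<mu> x * V x)"

definition convex_risk_measure :: "(('s \<Rightarrow> real) \<Rightarrow> real) \<Rightarrow> bool" where
  "convex_risk_measure \<rho> \<longleftrightarrow>
     (\<forall>V V'. (\<forall>x. V' x \<le> V x) \<longrightarrow> \<rho> V \<le> \<rho> V') \<and>
     (\<forall>V m. \<rho> (\<lambda>x. V x + m) = \<rho> V - m) \<and>
     (\<forall>V W t. 0 \<le> t \<and> t \<le> 1 \<longrightarrow>
        \<rho> (\<lambda>x. t * V x + (1 - t) * W x) \<le> t * \<rho> V + (1 - t) * \<rho> W)"

definition penalty :: "('s::finite pmf \<Rightarrow> ('s \<Rightarrow> real) \<Rightarrow> real) \<Rightarrow> 's pmf \<Rightarrow> 's pmf \<Rightarrow> ereal" where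
  "penalty sig \<mu> \<nu> = (SUP V. ereal (- sig \<nu> V - pexp \<mu> V))"

definition rs_V_pol ::
  "('s::finite pmf \<Rightarrow> ('s \<Rightarrow> real) \<Rightarrow> real) \<Rightarrow> ('s \<Rightarrow> 'a::finite \<Rightarrow> 's pmf) \<Rightarrow> ('s \<Rightarrow> 'a \<Rightarrow> real)
    \<Rightarrow> real \<Rightarrow> ('s \<Rightarrow> 'a pmf) \<Rightarrow> 's \<Rightarrow> real" where
  "rs_V_pol sig P r \<gamma> \<pi> = (THE V. \<forall>s. V s = (\<Sum>a\<in>UNIV. pmf (\<pi> s) a * (r s a - \<gamma> * sig (P s a) V)))"

definition rs_V_opt ::
  "('s::finite pmf \<Rightarrow> ('s \<Rightarrow> real) \<Rightarrow> real) \<Rightarrow> ('s \<Rightarrow> 'a::finite \<Rightarrow> 's pmf) \<Rightarrow> ('s \<Rightarrow> 'a \<Rightarrow> real)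
    \<Rightarrow> real \<Rightarrow> 's \<Rightarrow> real" where
  "rs_V_opt sig P r \<gamma> = (THE V. \<forall>s. V s = (MAX a. r s a - \<gamma> * sig (P s a) V))"

definition rs_Q_pol ::
  "('s::finite pmf \<Rightarrow> ('s \<Rightarrow> real) \<Rightarrow> real) \<Rightarrow> ('s \<Rightarrow> 'a::finite \<Rightarrow> 's pmf) \<Rightarrow> ('s \<Rightarrow> 'a \<Rightarrow> real)
    \<Rightarrow> real \<Rightarrow> ('s \<Rightarrow> 'a pmf) \<Rightarrow> 's \<Rightarrow> 'a \<Rightarrow> real" where
  "rs_Q_pol sig P r \<gamma> \<pi> s a = r s a - \<gamma> * sig (P s a) (rs_V_pol sig P r \<gamma> \<pi>)"

definition rs_Q_opt ::
  "('s::finite pmf \<Rightarrow> ('s \<Rightarrow> real) \<Rightarrow> real) \<Rightarrow> ('s \<Rightarrow> 'a::finite \<Rightarrow> 's pmf) \<Rightarrow> ('s \<Rightarrow> 'a \<Rightarrow> real)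
    \<Rightarrow> real \<Rightarrow> 's \<Rightarrow> 'a \<Rightarrow> real" where
  "rs_Q_opt sig P r \<gamma> s a = r s a - \<gamma> * sig (P s a) (rs_V_opt sig P r \<gamma>)"

text \<open>History-dependent randomized action choice: given the past history
  (list of (state, action) pairs, its length is the current time) and the current state,
  a distribution over actions.\<close>
type_synonym ('s, 'a) hpolicy = "('s \<times> 'a) list \<Rightarrow> 's \<Rightarrow> 'a pmf"
type_synonym ('s, 'a) kseq = "nat \<Rightarrow> 's \<Rightarrow> 'a \<Rightarrow> 's pmf"

text \<open>Distribution of the history (s_0,a_0),...,(s_n,a_n).\<close>
fun traj :: "('s, 'a) hpolicy \<Rightarrow> ('s, 'a) kseq \<Rightarrow> 's \<Rightarrow> nat \<Rightarrow> ('s \<times> 'a) list pmf" where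
  "traj \<mu> Q s 0 = map_pmf (\<lambda>a. [(s, a)]) (\<mu> [] s)"
| "traj \<mu> Q s (Suc n) =
     bind_pmf (traj \<mu> Q s n) (\<lambda>h.
       bind_pmf (Q n (fst (last h)) (snd (last h))) (\<lambda>s'.
         map_pmf (\<lambda>a'. h @ [(s', a')]) (\<mu> h s')))"

definition stage ::
  "('s::finite pmf \<Rightarrow> ('s \<Rightarrow> real) \<Rightarrow> real) \<Rightarrow> ('s \<Rightarrow> 'a \<Rightarrow> 's pmf) \<Rightarrow> ('s \<Rightarrow> 'a \<Rightarrow> real)
    \<Rightarrow> real \<Rightarrow> ('s, 'a) kseq \<Rightarrow> nat \<Rightarrow> 's \<times> 'a \<Rightarrow> ereal" where
  "stage sig P r \<gamma> Q t xa =
     ereal (r (fst xa) (snd xa)) + ereal \<gamma> * penalty sig (Q t (fst xa) (snd xa)) (P (fst xa) (snd xa))"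

definition ret ::
  "('s::finite pmf \<Rightarrow> ('s \<Rightarrow> real) \<Rightarrow> real) \<Rightarrow> ('s \<Rightarrow> 'a \<Rightarrow> 's pmf) \<Rightarrow> ('s \<Rightarrow> 'a \<Rightarrow> real)
    \<Rightarrow> real \<Rightarrow> ('s, 'a) hpolicy \<Rightarrow> ('s, 'a) kseq \<Rightarrow> 's \<Rightarrow> ereal" where
  "ret sig P r \<gamma> \<mu> Q s =
     (\<Sum>t. ereal (\<gamma> ^ t) *
        (\<Sum>h\<in>set_pmf (traj \<mu> Q s t). ereal (pmf (traj \<mu> Q s t) h) * stage sig P r \<gamma> Q t (last h)))"

definition stat_pol :: "('s \<Rightarrow> 'a pmf) \<Rightarrow> ('s, 'a) hpolicy" where
  "stat_pol \<pi> = (\<lambda>h x. \<pi> x)"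

definition det_pol :: "('s \<Rightarrow> 'a) \<Rightarrow> ('s, 'a) hpolicy" where
  "det_pol f = (\<lambda>h x. return_pmf (f x))"

definition force_first :: "'a \<Rightarrow> ('s, 'a) hpolicy \<Rightarrow> ('s, 'a) hpolicy" where
  "force_first a \<mu> = (\<lambda>h x. if h = [] then return_pmf a else \<mu> h x)"

definition rb_V_pol where
  "rb_V_pol sig P r \<gamma> \<pi> s = (INF Q. ret sig P r \<gamma> (stat_pol \<pi>) Q s)"

definition rb_V_opt where
  "rb_V_opt sig P r \<gamma> s = (SUP \<mu>. INF Q. ret sig P r \<gamma> \<mu> Q s)"

definition rb_Q_pol where
  "rb_Q_pol sig P r \<gamma> \<pi> s a = (INF Q. ret sig P r \<gamma> (force_first a (stat_pol \<pi>)) Q s)"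

definition rb_Q_opt where
  "rb_Q_opt sig P r \<gamma> s a = (SUP \<mu>. INF Q. ret sig P r \<gamma> (force_first a \<mu>) Q s)"

end

theory Submission
  imports Defs
begin

text \<open>
  A convex risk measure is 1-Lipschitz in the sup distance, so the risk-sensitive Bellman operators are
  \<open>\<gamma>\<close>-contractions with unique fixed points.  The penalty is the convex conjugate of \<open>\<sigma>(P,\<cdot>)\<close>: every
  kernel \<open>\<mu>\<close> satisfies the Fenchel-Young inequality \<open>r - \<gamma>\<sigma>(P,V) \<le> r + \<gamma>D(\<mu>,P) + \<gamma>E\<^sub>\<mu>V\<close>;
  separating \<open>(V, \<sigma>(P,V) - \<epsilon>)\<close> from the closed convex epigraph of \<open>\<sigma>(P,\<cdot>)\<close> gives a kernel for which it
  is tight up to \<open>\<gamma>\<epsilon>\<close>, and a minimizer of \<open>D(\<cdot>,P) + E\<^sub>\<cdot>V\<close> makes it exact.  Using a risk-sensitive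
  value \<open>V\<close> as a potential, these one-step bounds telescope along the trajectory distribution: against
  every adversary the regularized return is at least \<open>V\<close> when the actions are \<open>V\<close>-greedy (resp. follow
  \<open>\<pi>\<close>), and against the (\<open>\<epsilon>\<close>-)minimizing stationary adversary it is at most \<open>V\<close> (plus \<open>\<gamma>\<epsilon>/(1-\<gamma>)\<close>)
  for every strategy that never does better than \<open>V\<close>.
\<close>

section \<open>Contractions in the sup distance\<close>

definition sup_dist :: "('s::finite \<Rightarrow> real) \<Rightarrow> ('s \<Rightarrow> real) \<Rightarrow> real" where
  "sup_dist V W = (MAX x. \<bar>V x - W x\<bar>)"

lemma abs_diff_le_sup_dist: "\<bar>V x - W x\<bar> \<le> sup_dist V W"
  unfolding sup_dist_def by (rule Max_ge) auto

lemma sup_dist_le_iff: "sup_dist V W \<le> c \<longleftrightarrow> (\<forall>x. \<bar>V x - W x\<bar> \<le> c)"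
  unfolding sup_dist_def by (subst Max_le_iff) auto

lemma fspace_finite_UNIV: "Met_TC.fspace (UNIV :: 's::finite set) = (UNIV :: ('s \<Rightarrow> 'a::metric_space) set)"
  by (auto simp: Met_TC.fspace_def finite_imp_bounded)

lemma fdist_finite_UNIV: "Met_TC.fdist (UNIV :: 's::finite set) V W = sup_dist V W"
  by (simp add: Met_TC.fdist_def fspace_finite_UNIV sup_dist_def dist_real_def cSup_eq_Max)

lemma contraction_unique_fixpoint:
  fixes T :: "('s::finite \<Rightarrow> real) \<Rightarrow> 's \<Rightarrow> real"
  assumes "\<gamma> < 1" and "\<And>V W. sup_dist (T V) (T W) \<le> \<gamma> * sup_dist V W"
  shows "\<exists>!V. T V = V"
proof -
  interpret F: Metric_space "Met_TC.fspace (UNIV :: 's set)" "Met_TC.fdist UNIV :: _ \<Rightarrow> _ \<Rightarrow> real"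
    by (rule Met_TC.Metric_space_funspace)
  have "Met_TC.mcomplete TYPE(real)"
    using complete_UNIV[where 'a = real] by simp
  then have "mcomplete_of (funspace (UNIV :: 's set) (Met_TC.Self :: real metric))"
    by (rule Met_TC.mcomplete_funspace)
  then have complete: "Metric_space.mcomplete (Met_TC.fspace (UNIV :: 's set))
      (Met_TC.fdist UNIV :: ('s \<Rightarrow> real) \<Rightarrow> _ \<Rightarrow> real)"
    by (simp add: mcomplete_of_def)
  obtain V where "T V = V"
    by (rule F.Banach_fixedpoint_thm[OF complete]) (use assms in \<open>auto simp: fspace_finite_UNIV fdist_finite_UNIV\<close>)
  moreover have "V = W" if "T V = V" "T W = W" for V W
    by (rule F.contraction_imp_unique_fixpoint[of T])
      (use assms that in \<open>auto simp: fspace_finite_UNIV fdist_finite_UNIV\<close>)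
  ultimately show ?thesis by blast
qed

lemma unique_fixpoint_The:
  assumes "\<exists>!V. T V = V"
  shows "T (THE V. \<forall>s. V s = T V s) = (THE V. \<forall>s. V s = T V s)"
proof -
  have "(\<lambda>V. \<forall>s. V s = T V s) = (\<lambda>V. T V = V)"
    by (auto simp: fun_eq_iff)
  with theI'[OF assms] show ?thesis
    by simp
qed

lemma finite_abs_bound:
  fixes f :: "'b::finite \<Rightarrow> real"
  shows "\<exists>B. \<forall>x. \<bar>f x\<bar> \<le> B"
  by (intro exI[of _ "Max (range (\<lambda>x. \<bar>f x\<bar>))"] allI Max_ge) auto

lemma pexp_mono: "(\<And>x. V x \<le> W x) \<Longrightarrow> pexp \<mu> V \<le> pexp \<mu> W"
  unfolding pexp_def by (intro sum_mono mult_left_mono) auto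

lemma pexp_const [simp]: "pexp \<mu> (\<lambda>_. c) = c"
  unfolding pexp_def by (simp add: sum_distrib_right[symmetric] sum_pmf_eq_1)

lemma pexp_return_pmf [simp]: "pexp (return_pmf a) f = f a"
  unfolding pexp_def by (simp add: pmf_return if_distrib cong: if_cong)

lemma pexp_diff: "pexp \<mu> (\<lambda>x. V x - W x) = pexp \<mu> V - pexp \<mu> W"
  unfolding pexp_def by (simp add: right_diff_distrib sum_subtractf)

lemma pexp_le_const: "(\<And>x. V x \<le> c) \<Longrightarrow> pexp \<mu> V \<le> c"
  using pexp_mono[of V "\<lambda>_. c"] by simp

lemma abs_pexp_le:
  assumes "\<And>x. \<bar>V x\<bar> \<le> c"
  shows "\<bar>pexp \<mu> V\<bar> \<le> c"
proof -
  have "pexp \<mu> V \<le> pexp \<mu> (\<lambda>_. c)" "pexp \<mu> (\<lambda>_. - c) \<le> pexp \<mu> V"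
    by (rule pexp_mono, meson assms abs_le_iff minus_le_iff)+
  then show ?thesis by (simp add: abs_le_iff)
qed

text \<open>\<open>pexp\<close> sums over a finite type; histories form an infinite type, so their expectations are sums
  over the (finite) support.\<close>

definition fexpect :: "'b pmf \<Rightarrow> ('b \<Rightarrow> real) \<Rightarrow> real" where
  "fexpect p f = (\<Sum>h\<in>set_pmf p. pmf p h * f h)"

lemma fexpect_eq_expectation:
  "finite (set_pmf p) \<Longrightarrow> fexpect p f = measure_pmf.expectation p f"
  unfolding fexpect_def by (subst integral_measure_pmf_real[of "set_pmf p"]) (auto simp: mult.commute)

lemma fexpect_mono: "(\<And>h. h \<in> set_pmf p \<Longrightarrow> f h \<le> g h) \<Longrightarrow> fexpect p f \<le> fexpect p g"
  unfolding fexpect_def by (intro sum_mono mult_left_mono) auto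

lemma fexpect_const: "finite (set_pmf p) \<Longrightarrow> fexpect p (\<lambda>_. c) = c"
  unfolding fexpect_def by (simp add: sum_distrib_right[symmetric] sum_pmf_eq_1)

lemma fexpect_diff: "fexpect p (\<lambda>h. f h - g h) = fexpect p f - fexpect p g"
  unfolding fexpect_def by (simp add: right_diff_distrib sum_subtractf)

lemma fexpect_add: "fexpect p (\<lambda>h. f h + g h) = fexpect p f + fexpect p g"
  unfolding fexpect_def by (simp add: distrib_left sum.distrib)

lemma fexpect_cmult: "fexpect p (\<lambda>h. c * f h) = c * fexpect p f"
  unfolding fexpect_def by (simp add: sum_distrib_left algebra_simps)

lemma abs_fexpect_le:
  assumes "finite (set_pmf p)" "\<And>h. h \<in> set_pmf p \<Longrightarrow> \<bar>f h\<bar> \<le> c"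
  shows "\<bar>fexpect p f\<bar> \<le> c"
proof -
  have "fexpect p f \<le> fexpect p (\<lambda>_. c)" "fexpect p (\<lambda>_. - c) \<le> fexpect p f"
    by (rule fexpect_mono, meson assms(2) abs_le_iff minus_le_iff)+
  then show ?thesis by (simp add: fexpect_const[OF assms(1)] abs_le_iff)
qed

lemma ereal_fexpect:
  "ereal (fexpect p f) = (\<Sum>h\<in>set_pmf p. ereal (pmf p h) * ereal (f h))"
  by (simp add: fexpect_def)

lemma ereal_fexpect_le_sum:
  "(\<And>h. h \<in> set_pmf p \<Longrightarrow> ereal (f h) \<le> F h)
    \<Longrightarrow> ereal (fexpect p f) \<le> (\<Sum>h\<in>set_pmf p. ereal (pmf p h) * F h)"
  unfolding ereal_fexpect by (intro sum_mono ereal_mult_left_mono) auto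

lemma sum_le_ereal_fexpect:
  "(\<And>h. h \<in> set_pmf p \<Longrightarrow> F h \<le> ereal (f h))
    \<Longrightarrow> (\<Sum>h\<in>set_pmf p. ereal (pmf p h) * F h) \<le> ereal (fexpect p f)"
  unfolding ereal_fexpect by (intro sum_mono ereal_mult_left_mono) auto

section \<open>Convex risk measures and their penalty\<close>

lemma convex_risk_measure_antimono:
  "convex_risk_measure \<rho> \<Longrightarrow> (\<And>x. V' x \<le> V x) \<Longrightarrow> \<rho> V \<le> \<rho> V'"
  unfolding convex_risk_measure_def by blast

lemma convex_risk_measure_shift:
  "convex_risk_measure \<rho> \<Longrightarrow> \<rho> (\<lambda>x. V x + m) = \<rho> V - m"
  unfolding convex_risk_measure_def by blast

lemma convex_risk_measure_lipschitz:
  assumes crm: "convex_risk_measure \<rho>" and close: "\<And>x. \<bar>V x - W x\<bar> \<le> m"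
  shows "\<bar>\<rho> V - \<rho> W\<bar> \<le> m"
proof -
  have "\<rho> (\<lambda>x. W x + m) \<le> \<rho> V" "\<rho> (\<lambda>x. V x + m) \<le> \<rho> W"
    using close[unfolded abs_le_iff] by (auto intro!: convex_risk_measure_antimono[OF crm] simp: algebra_simps)
  then show ?thesis
    by (simp add: convex_risk_measure_shift[OF crm] abs_le_iff)
qed

lemma convex_risk_measure_nonexpansive:
  "convex_risk_measure \<rho> \<Longrightarrow> \<bar>\<rho> V - \<rho> W\<bar> \<le> sup_dist V W"
  by (erule convex_risk_measure_lipschitz) (rule abs_diff_le_sup_dist)

lemma convex_risk_measure_epigraph:
  fixes \<rho> :: "('s::finite \<Rightarrow> real) \<Rightarrow> real"
  assumes crm: "convex_risk_measure \<rho>"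
  shows "closed (epigraph UNIV (\<lambda>v::real^'s. \<rho> (($) v)))"
    and "convex (epigraph UNIV (\<lambda>v::real^'s. \<rho> (($) v)))"
proof -
  define F where "F v = \<rho> (($) v)" for v :: "real^'s"
  have "1-lipschitz_on UNIV F"
  proof (rule lipschitz_onI)
    fix v w :: "real^'s"
    have "\<bar>F v - F w\<bar> \<le> norm (v - w)"
      unfolding F_def
      by (rule convex_risk_measure_lipschitz[OF crm]) (metis component_le_norm_cart vector_minus_component)
    then show "dist (F v) (F w) \<le> 1 * dist v w"
      by (simp add: dist_norm dist_real_def)
  qed simp
  then have "closed {p :: (real^'s) \<times> real. F (fst p) \<le> snd p}"
    by (intro closed_Collect_le continuous_on_compose2[OF lipschitz_on_continuous_on continuous_on_fst]
        continuous_on_snd) (auto intro: continuous_on_id)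
  then show "closed (epigraph UNIV (\<lambda>v::real^'s. \<rho> (($) v)))"
    by (simp add: epigraph_def F_def)
  have "convex_on UNIV F"
  proof (rule convex_onI)
    fix t :: real and v u :: "real^'s"
    assume "0 < t" "t < 1"
    have convex: "\<And>V U s. 0 \<le> s \<Longrightarrow> s \<le> 1 \<Longrightarrow>
        \<rho> (\<lambda>x. s * V x + (1 - s) * U x) \<le> s * \<rho> V + (1 - s) * \<rho> U"
      using crm unfolding convex_risk_measure_def by blast
    have "\<rho> (\<lambda>x. (1 - t) * v $ x + (1 - (1 - t)) * u $ x)
        \<le> (1 - t) * \<rho> (($) v) + (1 - (1 - t)) * \<rho> (($) u)"
      using \<open>0 < t\<close> \<open>t < 1\<close> by (intro convex) auto
    moreover have "($) ((1 - t) *\<^sub>R v + t *\<^sub>R u) = (\<lambda>x. (1 - t) * v $ x + t * u $ x)"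
      by auto
    ultimately show "F ((1 - t) *\<^sub>R v + t *\<^sub>R u) \<le> (1 - t) * F v + t * F u"
      by (simp add: F_def)
  qed simp
  then show "convex (epigraph UNIV (\<lambda>v::real^'s. \<rho> (($) v)))"
    unfolding F_def by (rule convex_epigraphI)
qed

lemma convex_risk_measure_affine_minorant:
  fixes \<rho> :: "('s::finite \<Rightarrow> real) \<Rightarrow> real"
  assumes crm: "convex_risk_measure \<rho>" and \<epsilon>: "0 < \<epsilon>"
  obtains g where "\<And>V. \<rho> W - \<epsilon> - (\<Sum>x\<in>UNIV. g x * (V x - W x)) \<le> \<rho> V"
proof -
  define F where "F v = \<rho> (($) v)" for v :: "real^'s"
  define w where "w = (\<chi> x. W x)"
  have Fw: "F w = \<rho> W"
    by (simp add: F_def w_def vec_lambda_inverse)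
  have "(w, \<rho> W - \<epsilon>) \<notin> epigraph UNIV F"
    using \<epsilon> by (simp add: mem_epigraph Fw)
  then obtain a b where below: "inner a (w, \<rho> W - \<epsilon>) < b"
    and above: "\<forall>p\<in>epigraph UNIV F. b < inner a p"
    using separating_hyperplane_closed_point convex_risk_measure_epigraph[OF crm]
    unfolding F_def[abs_def] by blast
  obtain a1 a2 where a: "a = (a1, a2)" by fastforce
  have hyperplane: "b < inner a1 v + a2 * F v" for v
    using above[rule_format, of "(v, F v)"] by (simp add: a mem_epigraph)
  have "0 < a2 * \<epsilon>"
    using below hyperplane[of w] by (simp add: a Fw algebra_simps)
  then have "0 < a2"
    using \<epsilon> by (simp add: zero_less_mult_iff)
  show thesis
  proof
    fix V :: "'s \<Rightarrow> real"
    define v where "v = (\<chi> x. V x)"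
    have Fv: "F v = \<rho> V"
      by (simp add: F_def v_def vec_lambda_inverse)
    have "inner a1 v - inner a1 w = (\<Sum>x\<in>UNIV. a1 $ x * (V x - W x))"
      by (simp add: inner_vec_def v_def w_def sum_subtractf[symmetric] algebra_simps)
    also have "\<dots> = a2 * (\<Sum>x\<in>UNIV. a1 $ x / a2 * (V x - W x))"
      using \<open>0 < a2\<close> by (simp add: sum_distrib_left)
    finally have "inner a1 v - inner a1 w = a2 * (\<Sum>x\<in>UNIV. a1 $ x / a2 * (V x - W x))"
      (is "_ = a2 * ?S") .
    moreover have "a2 * (\<rho> W - \<epsilon>) < a2 * \<rho> V + (inner a1 v - inner a1 w)"
      using below hyperplane[of v] by (simp add: a Fv)
    ultimately have "a2 * (\<rho> W - \<epsilon> - ?S) < a2 * \<rho> V"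
      by (simp add: algebra_simps)
    then show "\<rho> W - \<epsilon> - ?S \<le> \<rho> V"
      using \<open>0 < a2\<close> by simp
  qed
qed

lemma affine_minorant_weights_nonneg:
  fixes \<rho> :: "('s::finite \<Rightarrow> real) \<Rightarrow> real"
  assumes crm: "convex_risk_measure \<rho>" and \<epsilon>: "0 < \<epsilon>"
    and minorant: "\<And>V. \<rho> W - \<epsilon> - (\<Sum>x\<in>UNIV. g x * (V x - W x)) \<le> \<rho> V"
  shows "0 \<le> g y"
proof (rule ccontr)
  assume "\<not> 0 \<le> g y"
  define k where "k = 2 * \<epsilon> / - g y"
  define V where "V x = W x + (if x = y then k else 0)" for x
  have "(\<Sum>x\<in>UNIV. g x * (V x - W x)) = (\<Sum>x\<in>UNIV. if x = y then g y * k else 0)"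
    by (rule sum.cong) (auto simp: V_def)
  also have "\<dots> = - 2 * \<epsilon>"
    using \<open>\<not> 0 \<le> g y\<close> by (simp add: k_def)
  finally have "\<rho> W + \<epsilon> \<le> \<rho> V"
    using minorant[of V] by simp
  moreover have "\<rho> V \<le> \<rho> W"
    using \<epsilon> \<open>\<not> 0 \<le> g y\<close> by (intro convex_risk_measure_antimono[OF crm]) (auto simp: V_def k_def intro: divide_nonneg_neg)
  ultimately show False
    using \<epsilon> by simp
qed

lemma affine_minorant_weights_sum:
  fixes \<rho> :: "('s::finite \<Rightarrow> real) \<Rightarrow> real"
  assumes crm: "convex_risk_measure \<rho>" and \<epsilon>: "0 < \<epsilon>"
    and minorant: "\<And>V. \<rho> W - \<epsilon> - (\<Sum>x\<in>UNIV. g x * (V x - W x)) \<le> \<rho> V"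
  shows "(\<Sum>x\<in>UNIV. g x) = 1"
proof (rule ccontr)
  let ?S = "\<Sum>x\<in>UNIV. g x"
  assume "?S \<noteq> 1"
  have "- \<epsilon> \<le> m * (?S - 1)" for m
    using minorant[of "\<lambda>x. W x + m"] convex_risk_measure_shift[OF crm, of W m]
    by (simp add: sum_distrib_left algebra_simps)
  from this[of "- 2 * \<epsilon> / (?S - 1)"] show False
    using \<epsilon> \<open>?S \<noteq> 1\<close> by simp
qed

lemma convex_risk_measure_subgradient:
  fixes \<rho> :: "('s::finite \<Rightarrow> real) \<Rightarrow> real"
  assumes crm: "convex_risk_measure \<rho>" and \<epsilon>: "0 < \<epsilon>"
  obtains \<mu> :: "'s pmf" where "\<And>V. \<rho> W - \<epsilon> - pexp \<mu> (\<lambda>x. V x - W x) \<le> \<rho> V"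
proof -
  obtain g where minorant: "\<And>V. \<rho> W - \<epsilon> - (\<Sum>x\<in>UNIV. g x * (V x - W x)) \<le> \<rho> V"
    using convex_risk_measure_affine_minorant[OF crm \<epsilon>] by blast
  note nonneg = affine_minorant_weights_nonneg[OF crm \<epsilon> minorant]
  have "pmf (embed_pmf g) x = g x" for x
    using affine_minorant_weights_sum[OF crm \<epsilon> minorant]
    by (intro pmf_embed_pmf nonneg) (simp add: nn_integral_count_space_finite nonneg)
  then show thesis
    using minorant by (intro that[of "embed_pmf g"]) (simp add: pexp_def)
qed

lemma penalty_ge: "ereal (- sig \<nu> V - pexp \<mu> V) \<le> penalty sig \<mu> \<nu>"
  unfolding penalty_def by (rule SUP_upper) simp

lemma penalty_le: "(\<And>V. - sig \<nu> V - pexp \<mu> V \<le> c) \<Longrightarrow> penalty sig \<mu> \<nu> \<le> ereal c"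
  unfolding penalty_def by (rule SUP_least) simp

lemma penalty_nearly_attained:
  fixes \<nu> :: "'s::finite pmf"
  assumes "convex_risk_measure (sig \<nu>)" and "0 < \<epsilon>"
  obtains \<mu> where "penalty sig \<mu> \<nu> \<le> ereal (- sig \<nu> W - pexp \<mu> W + \<epsilon>)"
proof -
  obtain \<mu> where "\<And>V. sig \<nu> W - \<epsilon> - pexp \<mu> (\<lambda>x. V x - W x) \<le> sig \<nu> V"
    using convex_risk_measure_subgradient[OF assms] by blast
  then have "penalty sig \<mu> \<nu> \<le> ereal (- sig \<nu> W - pexp \<mu> W + \<epsilon>)"
    by (intro penalty_le) (simp add: pexp_diff algebra_simps)
  then show thesis ..
qed

lemma penalty_minimizer_tight:
  fixes \<nu> :: "'s::finite pmf"
  assumes crm: "convex_risk_measure (sig \<nu>)"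
    and min: "\<And>\<mu>. penalty sig \<mu>\<^sub>0 \<nu> + ereal (pexp \<mu>\<^sub>0 W) \<le> penalty sig \<mu> \<nu> + ereal (pexp \<mu> W)"
  shows "penalty sig \<mu>\<^sub>0 \<nu> \<le> ereal (- sig \<nu> W - pexp \<mu>\<^sub>0 W)"
proof -
  have "penalty sig \<mu>\<^sub>0 \<nu> + ereal (pexp \<mu>\<^sub>0 W) \<le> ereal (- sig \<nu> W) + ereal \<epsilon>" if \<epsilon>: "0 < \<epsilon>" for \<epsilon>
  proof -
    obtain \<mu> where "penalty sig \<mu> \<nu> \<le> ereal (- sig \<nu> W - pexp \<mu> W + \<epsilon>)"
      using penalty_nearly_attained[where sig = sig and \<nu> = \<nu>, OF crm \<epsilon>] .
    then have "penalty sig \<mu> \<nu> + ereal (pexp \<mu> W) \<le> ereal (- sig \<nu> W - pexp \<mu> W + \<epsilon>) + ereal (pexp \<mu> W)"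
      by (rule add_right_mono)
    then have "penalty sig \<mu> \<nu> + ereal (pexp \<mu> W) \<le> ereal (- sig \<nu> W) + ereal \<epsilon>"
      by simp
    with min[of \<mu>] show ?thesis by (rule order_trans)
  qed
  then have "penalty sig \<mu>\<^sub>0 \<nu> + ereal (pexp \<mu>\<^sub>0 W) \<le> ereal (- sig \<nu> W)"
    by (rule ereal_le_epsilon2)
  then show ?thesis
    by (cases "penalty sig \<mu>\<^sub>0 \<nu>") simp_all
qed

lemma finite_set_pmf_traj:
  fixes \<mu> :: "('s::finite, 'a::finite) hpolicy"
  shows "finite (set_pmf (traj \<mu> Q s t))"
proof (induction t)
  case (Suc t)
  have "set_pmf (traj \<mu> Q s (Suc t)) \<subseteq> (\<lambda>(h, x). h @ [x]) ` (set_pmf (traj \<mu> Q s t) \<times> UNIV)"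
    by (auto simp: set_bind_pmf)
  then show ?case
    by (rule finite_subset) (use Suc in auto)
qed simp

lemma traj_nonempty: "h \<in> set_pmf (traj \<mu> Q s t) \<Longrightarrow> h \<noteq> []"
  by (cases t) auto

lemma fexpect_traj_0:
  fixes \<mu> :: "('s::finite, 'a::finite) hpolicy"
  shows "fexpect (traj \<mu> Q s 0) (\<lambda>h. f (last h)) = pexp (\<mu> [] s) (\<lambda>a. f (s, a))"
  by (subst fexpect_eq_expectation[OF finite_set_pmf_traj])
    (simp add: pexp_def integral_measure_pmf_real[of UNIV] mult.commute)

lemma fexpect_traj_Suc:
  fixes \<mu> :: "('s::finite, 'a::finite) hpolicy"
  shows "fexpect (traj \<mu> Q s (Suc t)) (\<lambda>h. f (last h)) =
    fexpect (traj \<mu> Q s t) (\<lambda>h. pexp (Q t (fst (last h)) (snd (last h)))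
      (\<lambda>s'. pexp (\<mu> h s') (\<lambda>a. f (s', a))))"
proof -
  define K where "K h = bind_pmf (Q t (fst (last h)) (snd (last h)))
    (\<lambda>s'. map_pmf (\<lambda>a'. h @ [(s', a')]) (\<mu> h s'))" for h
  have finite_K: "finite (set_pmf (K h))" for h
    by (rule finite_subset[of _ "(\<lambda>x. h @ [x]) ` UNIV"]) (auto simp: K_def)
  have step: "measure_pmf.expectation (K h) (\<lambda>h. f (last h)) =
      pexp (Q t (fst (last h)) (snd (last h))) (\<lambda>s'. pexp (\<mu> h s') (\<lambda>a. f (s', a)))" for h
    unfolding K_def by (subst pmf_expectation_bind[of UNIV])
      (auto simp: pexp_def integral_measure_pmf_real[of UNIV] mult.commute)
  have "traj \<mu> Q s (Suc t) = bind_pmf (traj \<mu> Q s t) K"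
    by (simp add: K_def[abs_def])
  then have "fexpect (traj \<mu> Q s (Suc t)) (\<lambda>h. f (last h)) =
      measure_pmf.expectation (bind_pmf (traj \<mu> Q s t) K) (\<lambda>h. f (last h))"
    using fexpect_eq_expectation[OF finite_set_pmf_traj] by metis
  also have "\<dots> = (\<Sum>h\<in>set_pmf (traj \<mu> Q s t). pmf (traj \<mu> Q s t) h *\<^sub>R
      measure_pmf.expectation (K h) (\<lambda>h. f (last h)))"
    by (rule pmf_expectation_bind) (auto simp: finite_set_pmf_traj finite_K)
  finally show ?thesis
    by (simp add: fexpect_def step)
qed

section \<open>Discounted series\<close>

lemma telescoping_discounted_sums:
  fixes x :: "nat \<Rightarrow> real"
  assumes "0 \<le> \<gamma>" "\<gamma> < 1" and bound: "\<And>t. \<bar>x t\<bar> \<le> B"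
  shows "(\<lambda>t. \<gamma>^t * (x t - \<gamma> * x (Suc t))) sums x 0"
proof -
  define y where "y t = \<gamma>^t * x t" for t
  have "(\<lambda>t. \<gamma>^t * B) \<longlonglongrightarrow> 0 * B"
    using assms by (intro tendsto_mult LIMSEQ_power_zero tendsto_const) auto
  moreover have "norm (y t) \<le> \<gamma>^t * B" for t
    using assms by (simp add: y_def abs_mult mult_left_mono)
  ultimately have "y \<longlonglongrightarrow> 0"
    using Lim_null_comparison[OF always_eventually, of y "\<lambda>t. \<gamma>^t * B"] by simp
  then have "(\<lambda>t. y t - y (Suc t)) sums (y 0 - 0)"
    by (rule telescope_sums')
  moreover have "y t - y (Suc t) = \<gamma>^t * (x t - \<gamma> * x (Suc t))" for t
    by (simp add: y_def right_diff_distrib)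
  ultimately show ?thesis
    by (simp add: y_def)
qed

lemma ereal_le_suminf:
  fixes f :: "nat \<Rightarrow> ereal"
  assumes "summable l" and le: "\<And>t. ereal (l t) \<le> f t"
  shows "ereal (suminf l) \<le> suminf f"
proof -
  define d where "d t = f t - ereal (l t)" for t
  have d: "0 \<le> d t" "f t = d t + ereal (l t)" for t
    using le[of t] by (cases "f t"; simp add: d_def)+
  have "0 \<le> suminf d"
    using d(1) by (simp add: suminf_nonneg summable_ereal_pos)
  moreover have "(\<lambda>n. \<Sum>i<n. d i) \<longlonglongrightarrow> suminf d"
    using d(1) summable_ereal_pos summable_LIMSEQ by blast
  moreover have "(\<lambda>n. \<Sum>i<n. ereal (l i)) \<longlonglongrightarrow> ereal (suminf l)"
    using summable_sums[OF \<open>summable l\<close>] by (simp add: sums_def sum_ereal lim_ereal)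
  ultimately have "(\<lambda>n. (\<Sum>i<n. d i) + (\<Sum>i<n. ereal (l i))) \<longlonglongrightarrow> suminf d + ereal (suminf l)"
    by (intro tendsto_add_ereal_nonneg) auto
  then have "f sums (suminf d + ereal (suminf l))"
    by (simp add: sums_def d(2) sum.distrib)
  then show ?thesis
    using \<open>0 \<le> suminf d\<close> by (simp add: sums_unique[symmetric] add_increasing)
qed

lemma suminf_le_ereal:
  fixes f :: "nat \<Rightarrow> ereal"
  assumes "summable l" "summable u" and bounds: "\<And>t. ereal (l t) \<le> f t" "\<And>t. f t \<le> ereal (u t)"
  shows "suminf f \<le> ereal (suminf u)"
proof -
  define k where "k t = real_of_ereal (f t)" for t
  have f: "f t = ereal (k t)" for t
    using bounds[of t] by (cases "f t") (auto simp: k_def)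
  have k: "l t \<le> k t" "k t \<le> u t" for t
    using bounds[of t] by (auto simp: f)
  have "summable (\<lambda>t. (k t - l t) + l t)"
    using k by (intro summable_add summable_comparison_test'[OF summable_diff[OF assms(2,1)]] assms(1)) auto
  then have "summable k"
    by simp
  then have "(\<lambda>t. f t) sums ereal (suminf k)"
    by (simp add: f sums_ereal summable_sums)
  then show ?thesis
    using suminf_le[OF _ \<open>summable k\<close> \<open>summable u\<close>] k by (simp add: sums_unique[symmetric])
qed

lemma discounted_suminf_ge_telescoping:
  fixes e :: "nat \<Rightarrow> ereal" and G :: "nat \<Rightarrow> real"
  assumes "0 \<le> \<gamma>" "\<gamma> < 1" "\<And>t. \<bar>G t\<bar> \<le> B"
    and step: "\<And>t. ereal (G t - \<gamma> * G (Suc t)) \<le> e t"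
  shows "ereal (G 0) \<le> (\<Sum>t. ereal (\<gamma>^t) * e t)"
proof -
  have sums: "(\<lambda>t. \<gamma>^t * (G t - \<gamma> * G (Suc t))) sums G 0"
    by (rule telescoping_discounted_sums[OF assms(1-3)])
  have "ereal (\<gamma>^t * (G t - \<gamma> * G (Suc t))) \<le> ereal (\<gamma>^t) * e t" for t
    using ereal_mult_left_mono[OF step[of t], of "ereal (\<gamma>^t)"] assms(1) by simp
  from ereal_le_suminf[OF sums_summable[OF sums] this] show ?thesis
    by (simp add: sums_unique[OF sums, symmetric])
qed

lemma discounted_suminf_le_telescoping:
  fixes e :: "nat \<Rightarrow> ereal" and G H :: "nat \<Rightarrow> real"
  assumes "0 \<le> \<gamma>" "\<gamma> < 1" "\<And>t. \<bar>G t\<bar> \<le> B" "\<And>t. \<bar>H t\<bar> \<le> B'"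
    and lower: "\<And>t. ereal (G t - \<gamma> * H t) \<le> e t"
    and step: "\<And>t. e t \<le> ereal (G t - \<gamma> * G (Suc t) + c)"
  shows "(\<Sum>t. ereal (\<gamma>^t) * e t) \<le> ereal (G 0 + c / (1 - \<gamma>))"
proof -
  have "(\<lambda>t. \<gamma>^t * c) sums (c / (1 - \<gamma>))"
    using sums_mult2[OF geometric_sums[of \<gamma>], of c] assms(1,2) by simp
  then have sums: "(\<lambda>t. \<gamma>^t * (G t - \<gamma> * G (Suc t)) + \<gamma>^t * c) sums (G 0 + c / (1 - \<gamma>))"
    by (intro sums_add telescoping_discounted_sums[OF assms(1-3)])
  have "\<bar>G t - \<gamma> * H t\<bar> \<le> B + B'" for t
  proof -
    have "\<bar>\<gamma> * H t\<bar> \<le> \<bar>H t\<bar>"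
      using assms(1,2) by (simp add: abs_mult mult_left_le_one_le)
    moreover have "\<bar>G t - \<gamma> * H t\<bar> \<le> \<bar>G t\<bar> + \<bar>\<gamma> * H t\<bar>"
      by (rule abs_triangle_ineq4)
    ultimately show ?thesis
      using assms(3,4)[of t] by linarith
  qed
  then have "norm (\<gamma>^t * (G t - \<gamma> * H t)) \<le> \<gamma>^t * (B + B')" for t
    using assms(1) by (simp add: abs_mult mult_left_mono)
  moreover have "summable (\<lambda>t. \<gamma>^t * (B + B'))"
    using assms(1,2) by (intro summable_mult2 summable_geometric) auto
  ultimately have "summable (\<lambda>t. \<gamma>^t * (G t - \<gamma> * H t))"
    by (blast intro: summable_comparison_test')
  moreover have "ereal (\<gamma>^t * (G t - \<gamma> * H t)) \<le> ereal (\<gamma>^t) * e t" for t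
    using ereal_mult_left_mono[OF lower[of t], of "ereal (\<gamma>^t)"] assms(1) by simp
  moreover have "ereal (\<gamma>^t) * e t \<le> ereal (\<gamma>^t * (G t - \<gamma> * G (Suc t)) + \<gamma>^t * c)" for t
    using ereal_mult_left_mono[OF step[of t], of "ereal (\<gamma>^t)"] assms(1) by (simp add: algebra_simps)
  ultimately have "(\<Sum>t. ereal (\<gamma>^t) * e t)
      \<le> ereal (\<Sum>t. \<gamma>^t * (G t - \<gamma> * G (Suc t)) + \<gamma>^t * c)"
    by (rule suminf_le_ereal[OF _ sums_summable[OF sums]])
  then show ?thesis
    by (simp add: sums_unique[OF sums, symmetric])
qed

section \<open>The risk-sensitive Bellman equations\<close>

lemma abs_Max_diff_le:
  fixes f g :: "'a::finite \<Rightarrow> real"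
  assumes "\<And>a. \<bar>f a - g a\<bar> \<le> c"
  shows "\<bar>(MAX a. f a) - (MAX a. g a)\<bar> \<le> c"
proof -
  have "(MAX a. f a) \<le> (MAX a. g a) + c" if "\<And>a. \<bar>f a - g a\<bar> \<le> c" for f g :: "'a \<Rightarrow> real"
  proof -
    have "f a \<le> (MAX a. g a) + c" for a
    proof -
      have "g a \<le> (MAX a. g a)" by (rule Max_ge) auto
      with that[of a] show ?thesis unfolding abs_le_iff by linarith
    qed
    then show ?thesis by (subst Max_le_iff) auto
  qed
  from this[of f g] this[of g f] assms show ?thesis
    by (fastforce simp: abs_le_iff abs_minus_commute simp del: Max_le_iff)
qed

locale discounted_risk_mdp =
  fixes P :: "'s::finite \<Rightarrow> 'a::finite \<Rightarrow> 's pmf"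
    and sig :: "'s pmf \<Rightarrow> ('s \<Rightarrow> real) \<Rightarrow> real"
    and r :: "'s \<Rightarrow> 'a \<Rightarrow> real"
    and \<gamma> :: real
  assumes risk_measure: "convex_risk_measure (sig (P s a))"
    and discount_nonneg: "0 \<le> \<gamma>"
    and discount_less_one: "\<gamma> < 1"
begin

definition q_value :: "('s \<Rightarrow> real) \<Rightarrow> 's \<Rightarrow> 'a \<Rightarrow> real" where
  "q_value V s a = r s a - \<gamma> * sig (P s a) V"

abbreviation V_opt :: "'s \<Rightarrow> real" where
  "V_opt \<equiv> rs_V_opt sig P r \<gamma>"

abbreviation V_pol :: "('s \<Rightarrow> 'a pmf) \<Rightarrow> 's \<Rightarrow> real" where
  "V_pol \<pi> \<equiv> rs_V_pol sig P r \<gamma> \<pi>"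

lemma q_value_contraction: "\<bar>q_value V s a - q_value W s a\<bar> \<le> \<gamma> * sup_dist V W"
proof -
  have "q_value V s a - q_value W s a = \<gamma> * (sig (P s a) W - sig (P s a) V)"
    by (simp add: q_value_def algebra_simps)
  then have "\<bar>q_value V s a - q_value W s a\<bar> = \<gamma> * \<bar>sig (P s a) V - sig (P s a) W\<bar>"
    using discount_nonneg by (simp add: abs_mult abs_minus_commute)
  also have "\<dots> \<le> \<gamma> * sup_dist V W"
    using discount_nonneg convex_risk_measure_nonexpansive[OF risk_measure] by (intro mult_left_mono)
  finally show ?thesis .
qed

lemma V_opt_fixpoint: "V_opt s = (MAX a. q_value V_opt s a)"
proof -
  have "\<exists>!V. (\<lambda>s. MAX a. q_value V s a) = V"
    by (rule contraction_unique_fixpoint[OF discount_less_one])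
      (auto simp: sup_dist_le_iff intro!: abs_Max_diff_le q_value_contraction)
  from unique_fixpoint_The[OF this] show ?thesis
    by (simp add: rs_V_opt_def q_value_def fun_eq_iff)
qed

lemma V_pol_fixpoint: "V_pol \<pi> s = pexp (\<pi> s) (q_value (V_pol \<pi>) s)"
proof -
  have "\<exists>!V. (\<lambda>s. pexp (\<pi> s) (q_value V s)) = V"
    by (rule contraction_unique_fixpoint[OF discount_less_one])
      (auto simp: sup_dist_le_iff pexp_diff[symmetric] intro!: abs_pexp_le q_value_contraction)
  from unique_fixpoint_The[OF this] show ?thesis
    by (simp add: rs_V_pol_def q_value_def pexp_def fun_eq_iff)
qed

section \<open>Regularized returns against a potential\<close>

lemma stage_ge: "ereal (q_value W x a - \<gamma> * pexp (Q t x a) W) \<le> stage sig P r \<gamma> Q t (x, a)"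
proof -
  have "ereal (q_value W x a - \<gamma> * pexp (Q t x a) W)
      = ereal (r x a) + ereal \<gamma> * ereal (- sig (P x a) W - pexp (Q t x a) W)"
    by (simp add: q_value_def algebra_simps)
  also have "\<dots> \<le> ereal (r x a) + ereal \<gamma> * penalty sig (Q t x a) (P x a)"
    using discount_nonneg by (intro add_left_mono ereal_mult_left_mono penalty_ge) simp
  finally show ?thesis
    by (simp add: stage_def)
qed

lemma stage_le:
  assumes "penalty sig (Q t x a) (P x a) \<le> ereal (- sig (P x a) W - pexp (Q t x a) W + \<epsilon>)"
  shows "stage sig P r \<gamma> Q t (x, a) \<le> ereal (q_value W x a - \<gamma> * pexp (Q t x a) W + \<gamma> * \<epsilon>)"
proof -
  have "stage sig P r \<gamma> Q t (x, a) = ereal (r x a) + ereal \<gamma> * penalty sig (Q t x a) (P x a)"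
    by (simp add: stage_def)
  also have "\<dots> \<le> ereal (r x a) + ereal \<gamma> * ereal (- sig (P x a) W - pexp (Q t x a) W + \<epsilon>)"
    using discount_nonneg assms by (intro add_left_mono ereal_mult_left_mono) simp_all
  also have "\<dots> = ereal (q_value W x a - \<gamma> * pexp (Q t x a) W + \<gamma> * \<epsilon>)"
    by (simp add: q_value_def algebra_simps)
  finally show ?thesis .
qed

definition expected_stage :: "('s, 'a) hpolicy \<Rightarrow> ('s, 'a) kseq \<Rightarrow> 's \<Rightarrow> nat \<Rightarrow> ereal" where
  "expected_stage \<mu> Q s t =
     (\<Sum>h\<in>set_pmf (traj \<mu> Q s t). ereal (pmf (traj \<mu> Q s t) h) * stage sig P r \<gamma> Q t (last h))"

definition expected_q_value :: "('s, 'a) hpolicy \<Rightarrow> ('s, 'a) kseq \<Rightarrow> ('s \<Rightarrow> real) \<Rightarrow> 's \<Rightarrow> nat \<Rightarrow> real" where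
  "expected_q_value \<mu> Q W s t = fexpect (traj \<mu> Q s t) (\<lambda>h. q_value W (fst (last h)) (snd (last h)))"

definition expected_next_value :: "('s, 'a) hpolicy \<Rightarrow> ('s, 'a) kseq \<Rightarrow> ('s \<Rightarrow> real) \<Rightarrow> 's \<Rightarrow> nat \<Rightarrow> real" where
  "expected_next_value \<mu> Q W s t = fexpect (traj \<mu> Q s t) (\<lambda>h. pexp (Q t (fst (last h)) (snd (last h))) W)"

lemma ret_eq_suminf_expected_stage:
  "ret sig P r \<gamma> \<mu> Q s = (\<Sum>t. ereal (\<gamma>^t) * expected_stage \<mu> Q s t)"
  by (simp add: ret_def expected_stage_def)

lemma expected_q_value_0: "expected_q_value \<mu> Q W s 0 = pexp (\<mu> [] s) (q_value W s)"
  unfolding expected_q_value_def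
  using fexpect_traj_0[of \<mu> Q s "\<lambda>p. q_value W (fst p) (snd p)"] by (simp del: traj.simps)

lemma expected_q_value_Suc:
  "expected_q_value \<mu> Q W s (Suc t) = fexpect (traj \<mu> Q s t)
     (\<lambda>h. pexp (Q t (fst (last h)) (snd (last h))) (\<lambda>s'. pexp (\<mu> h s') (q_value W s')))"
  unfolding expected_q_value_def
  using fexpect_traj_Suc[of \<mu> Q s t "\<lambda>p. q_value W (fst p) (snd p)"] by (simp del: traj.simps)

lemma expected_next_value_le_expected_q_value:
  assumes "\<And>h x. h \<noteq> [] \<Longrightarrow> W x \<le> pexp (\<mu> h x) (q_value W x)"
  shows "expected_next_value \<mu> Q W s t \<le> expected_q_value \<mu> Q W s (Suc t)"
  unfolding expected_q_value_Suc expected_next_value_def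
  by (intro fexpect_mono pexp_mono assms traj_nonempty)

lemma expected_q_value_le_expected_next_value:
  assumes "\<And>h x. h \<noteq> [] \<Longrightarrow> pexp (\<mu> h x) (q_value W x) \<le> W x"
  shows "expected_q_value \<mu> Q W s (Suc t) \<le> expected_next_value \<mu> Q W s t"
  unfolding expected_q_value_Suc expected_next_value_def
  by (intro fexpect_mono pexp_mono assms traj_nonempty)

lemma abs_expected_q_value_le:
  "(\<And>x a. \<bar>q_value W x a\<bar> \<le> B) \<Longrightarrow> \<bar>expected_q_value \<mu> Q W s t\<bar> \<le> B"
  unfolding expected_q_value_def by (rule abs_fexpect_le[OF finite_set_pmf_traj])

lemma abs_expected_next_value_le:
  "(\<And>x. \<bar>W x\<bar> \<le> B) \<Longrightarrow> \<bar>expected_next_value \<mu> Q W s t\<bar> \<le> B"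
  unfolding expected_next_value_def by (intro abs_fexpect_le[OF finite_set_pmf_traj] abs_pexp_le)

lemma expected_stage_ge:
  "ereal (expected_q_value \<mu> Q W s t - \<gamma> * expected_next_value \<mu> Q W s t) \<le> expected_stage \<mu> Q s t"
proof -
  have "ereal (fexpect (traj \<mu> Q s t) (\<lambda>h. q_value W (fst (last h)) (snd (last h))
      - \<gamma> * pexp (Q t (fst (last h)) (snd (last h))) W)) \<le> expected_stage \<mu> Q s t"
    unfolding expected_stage_def by (intro ereal_fexpect_le_sum) (metis stage_ge prod.collapse)
  then show ?thesis
    by (simp add: expected_q_value_def expected_next_value_def fexpect_diff fexpect_cmult)
qed

lemma expected_stage_le:
  assumes "\<And>x a. penalty sig (Q t x a) (P x a) \<le> ereal (- sig (P x a) W - pexp (Q t x a) W + \<epsilon>)"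
  shows "expected_stage \<mu> Q s t
    \<le> ereal (expected_q_value \<mu> Q W s t - \<gamma> * expected_next_value \<mu> Q W s t + \<gamma> * \<epsilon>)"
proof -
  have "expected_stage \<mu> Q s t \<le> ereal (fexpect (traj \<mu> Q s t) (\<lambda>h. q_value W (fst (last h)) (snd (last h))
      - \<gamma> * pexp (Q t (fst (last h)) (snd (last h))) W + \<gamma> * \<epsilon>))"
    unfolding expected_stage_def by (intro sum_le_ereal_fexpect) (metis assms stage_le prod.collapse)
  then show ?thesis
    by (simp add: expected_q_value_def expected_next_value_def fexpect_add fexpect_diff fexpect_cmult
        fexpect_const[OF finite_set_pmf_traj])
qed

lemma q_value_bounded: "\<exists>B. \<forall>x a. \<bar>q_value W x a\<bar> \<le> B"
  using finite_abs_bound[of "case_prod (q_value W)"] by auto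

lemma ret_ge_potential:
  assumes "\<And>h x. h \<noteq> [] \<Longrightarrow> W x \<le> pexp (\<mu> h x) (q_value W x)"
  shows "ereal (pexp (\<mu> [] s) (q_value W s)) \<le> ret sig P r \<gamma> \<mu> Q s"
proof -
  let ?G = "expected_q_value \<mu> Q W s"
  obtain B where "\<And>x a. \<bar>q_value W x a\<bar> \<le> B"
    using q_value_bounded by blast
  then have bound: "\<bar>?G t\<bar> \<le> B" for t
    by (rule abs_expected_q_value_le)
  have "ereal (?G t - \<gamma> * ?G (Suc t)) \<le> ereal (?G t - \<gamma> * expected_next_value \<mu> Q W s t)" for t
    using discount_nonneg expected_next_value_le_expected_q_value[OF assms] by (simp add: mult_left_mono)
  then have "ereal (?G t - \<gamma> * ?G (Suc t)) \<le> expected_stage \<mu> Q s t" for t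
    using expected_stage_ge order_trans by blast
  from discounted_suminf_ge_telescoping[where e = "expected_stage \<mu> Q s",
      OF discount_nonneg discount_less_one bound this]
  show ?thesis
    by (simp add: ret_eq_suminf_expected_stage expected_q_value_0)
qed

lemma ret_le_potential:
  assumes "\<And>h x. h \<noteq> [] \<Longrightarrow> pexp (\<mu> h x) (q_value W x) \<le> W x"
    and "\<And>x a. penalty sig (K x a) (P x a) \<le> ereal (- sig (P x a) W - pexp (K x a) W + \<epsilon>)"
  shows "ret sig P r \<gamma> \<mu> (\<lambda>t. K) s \<le> ereal (pexp (\<mu> [] s) (q_value W s) + \<gamma> * \<epsilon> / (1 - \<gamma>))"
proof -
  let ?G = "expected_q_value \<mu> (\<lambda>t. K) W s" and ?H = "expected_next_value \<mu> (\<lambda>t. K) W s"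
  obtain B B' where B: "\<And>x a. \<bar>q_value W x a\<bar> \<le> B" and B': "\<And>x. \<bar>W x\<bar> \<le> B'"
    using q_value_bounded finite_abs_bound[of W] by blast
  have bounds: "\<bar>?G t\<bar> \<le> B" "\<bar>?H t\<bar> \<le> B'" for t
    using abs_expected_q_value_le[OF B] abs_expected_next_value_le[OF B'] by auto
  have "ereal (?G t - \<gamma> * ?H t + \<gamma> * \<epsilon>) \<le> ereal (?G t - \<gamma> * ?G (Suc t) + \<gamma> * \<epsilon>)" for t
    using discount_nonneg expected_q_value_le_expected_next_value[OF assms(1)] by (simp add: mult_left_mono)
  then have "expected_stage \<mu> (\<lambda>t. K) s t \<le> ereal (?G t - \<gamma> * ?G (Suc t) + \<gamma> * \<epsilon>)" for t
    using expected_stage_le[OF assms(2)] order_trans by blast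
  from discounted_suminf_le_telescoping[where e = "expected_stage \<mu> (\<lambda>t. K) s",
      OF discount_nonneg discount_less_one bounds expected_stage_ge this]
  show ?thesis
    by (simp add: ret_eq_suminf_expected_stage expected_q_value_0)
qed

lemma robust_value_le_potential:
  assumes "\<And>h x. h \<noteq> [] \<Longrightarrow> pexp (\<mu> h x) (q_value W x) \<le> W x"
  shows "(INF Q. ret sig P r \<gamma> \<mu> Q s) \<le> ereal (pexp (\<mu> [] s) (q_value W s))"
proof (rule ereal_le_epsilon2)
  fix e :: real
  assume "0 < e"
  then have \<epsilon>: "0 < e * (1 - \<gamma>)"
    using discount_less_one by simp
  have "\<exists>\<nu>. penalty sig \<nu> (P x a) \<le> ereal (- sig (P x a) W - pexp \<nu> W + e * (1 - \<gamma>))" for x a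
    by (rule penalty_nearly_attained[where sig = sig and \<nu> = "P x a", OF risk_measure \<epsilon>]) blast
  then obtain K where "\<And>x a. penalty sig (K x a) (P x a) \<le> ereal (- sig (P x a) W - pexp (K x a) W + e * (1 - \<gamma>))"
    by metis
  from ret_le_potential[OF assms this]
  have "ret sig P r \<gamma> \<mu> (\<lambda>t. K) s \<le> ereal (pexp (\<mu> [] s) (q_value W s) + \<gamma> * e)"
    using discount_less_one by simp
  also have "\<dots> \<le> ereal (pexp (\<mu> [] s) (q_value W s)) + ereal e"
    using discount_nonneg discount_less_one \<open>0 < e\<close> by (simp add: mult_left_le_one_le)
  finally have "ret sig P r \<gamma> \<mu> (\<lambda>t. K) s \<le> ereal (pexp (\<mu> [] s) (q_value W s)) + ereal e" .
  moreover have "(INF Q. ret sig P r \<gamma> \<mu> Q s) \<le> ret sig P r \<gamma> \<mu> (\<lambda>t. K) s"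
    by (rule INF_lower) simp
  ultimately show "(INF Q. ret sig P r \<gamma> \<mu> Q s) \<le> ereal (pexp (\<mu> [] s) (q_value W s)) + ereal e"
    by (rule order_trans[rotated])
qed

definition minimizing_kernel :: "('s \<Rightarrow> real) \<Rightarrow> ('s \<Rightarrow> 'a \<Rightarrow> 's pmf) \<Rightarrow> bool" where
  "minimizing_kernel W K \<longleftrightarrow> (\<forall>x a \<nu>. penalty sig (K x a) (P x a) + ereal (pexp (K x a) W)
                                   \<le> penalty sig \<nu> (P x a) + ereal (pexp \<nu> W))"

lemma ret_minimizing_kernel_le_potential:
  assumes "\<And>h x. h \<noteq> [] \<Longrightarrow> pexp (\<mu> h x) (q_value W x) \<le> W x"
    and "minimizing_kernel W K"
  shows "ret sig P r \<gamma> \<mu> (\<lambda>t. K) s \<le> ereal (pexp (\<mu> [] s) (q_value W s))"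
proof -
  have "penalty sig (K x a) (P x a) \<le> ereal (- sig (P x a) W - pexp (K x a) W + 0)" for x a
    using penalty_minimizer_tight[where sig = sig and \<nu> = "P x a", OF risk_measure] assms(2)
    by (simp add: minimizing_kernel_def)
  from ret_le_potential[OF assms(1) this] show ?thesis
    by simp
qed

section \<open>Optimal values and optimal strategies\<close>

definition greedy :: "('s \<Rightarrow> 'a) \<Rightarrow> bool" where
  "greedy f \<longleftrightarrow> (\<forall>s a'. q_value V_opt s a' \<le> q_value V_opt s (f s))"

lemma q_value_le_V_opt: "q_value V_opt s a \<le> V_opt s"
  using V_opt_fixpoint[of s] Max_ge[of "range (q_value V_opt s)"] by simp

lemma greedy_exists: "\<exists>f. greedy f"
proof -
  have "\<exists>a. V_opt s = q_value V_opt s a" for s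
  proof -
    have "Max (range (q_value V_opt s)) \<in> range (q_value V_opt s)"
      by (rule Max_in) auto
    then show ?thesis
      using V_opt_fixpoint[of s] by (auto simp: image_iff)
  qed
  then obtain f where "\<And>s. V_opt s = q_value V_opt s (f s)"
    by metis
  then have "greedy f"
    unfolding greedy_def using q_value_le_V_opt by simp
  then show ?thesis by blast
qed

lemma V_opt_greedy:
  assumes "greedy f"
  shows "V_opt s = q_value V_opt s (f s)"
proof (rule antisym)
  show "V_opt s \<le> q_value V_opt s (f s)"
    using assms V_opt_fixpoint[of s] by (simp add: greedy_def)
qed (rule q_value_le_V_opt)

lemma robust_value_le_V_opt: "(INF Q. ret sig P r \<gamma> \<mu> Q s) \<le> ereal (pexp (\<mu> [] s) (q_value V_opt s))"
  by (intro robust_value_le_potential pexp_le_const q_value_le_V_opt)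

lemma ret_minimizing_kernel_le_V_opt:
  "minimizing_kernel V_opt K \<Longrightarrow> ret sig P r \<gamma> \<mu> (\<lambda>t. K) s \<le> ereal (pexp (\<mu> [] s) (q_value V_opt s))"
  by (intro ret_minimizing_kernel_le_potential pexp_le_const q_value_le_V_opt)

lemma ret_greedy_tail_ge:
  assumes "greedy f" and "\<And>h. h \<noteq> [] \<Longrightarrow> \<mu> h = det_pol f h"
  shows "ereal (pexp (\<mu> [] s) (q_value V_opt s)) \<le> ret sig P r \<gamma> \<mu> Q s"
proof (rule ret_ge_potential)
  fix h :: "('s \<times> 'a) list" and x
  assume "h \<noteq> []"
  then show "V_opt x \<le> pexp (\<mu> h x) (q_value V_opt x)"
    by (simp add: assms(2) det_pol_def V_opt_greedy[OF assms(1), of x, symmetric])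
qed

lemma robust_value_greedy_tail:
  assumes "greedy f" and "\<And>h. h \<noteq> [] \<Longrightarrow> \<mu> h = det_pol f h"
  shows "(INF Q. ret sig P r \<gamma> \<mu> Q s) = ereal (pexp (\<mu> [] s) (q_value V_opt s))"
  using robust_value_le_V_opt ret_greedy_tail_ge[OF assms] by (blast intro: antisym INF_greatest)

lemma ret_minimizing_kernel_greedy_tail:
  assumes "greedy f" and "\<And>h. h \<noteq> [] \<Longrightarrow> \<mu> h = det_pol f h" and "minimizing_kernel V_opt K"
  shows "ret sig P r \<gamma> \<mu> (\<lambda>t. K) s = ereal (pexp (\<mu> [] s) (q_value V_opt s))"
  using ret_minimizing_kernel_le_V_opt[OF assms(3)] ret_greedy_tail_ge[OF assms(1,2)] by (blast intro: antisym)

lemma stationary_tail_bellman: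
  "(\<And>h. h \<noteq> [] \<Longrightarrow> \<mu> h = stat_pol \<pi> h) \<Longrightarrow> h \<noteq> [] \<Longrightarrow> pexp (\<mu> h x) (q_value (V_pol \<pi>) x) = V_pol \<pi> x"
  by (simp add: stat_pol_def V_pol_fixpoint[symmetric])

lemma robust_value_stationary_tail:
  assumes "\<And>h. h \<noteq> [] \<Longrightarrow> \<mu> h = stat_pol \<pi> h"
  shows "(INF Q. ret sig P r \<gamma> \<mu> Q s) = ereal (pexp (\<mu> [] s) (q_value (V_pol \<pi>) s))"
proof (rule antisym)
  show "(INF Q. ret sig P r \<gamma> \<mu> Q s) \<le> ereal (pexp (\<mu> [] s) (q_value (V_pol \<pi>) s))"
    by (rule robust_value_le_potential) (simp add: stationary_tail_bellman[OF assms])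
  show "ereal (pexp (\<mu> [] s) (q_value (V_pol \<pi>) s)) \<le> (INF Q. ret sig P r \<gamma> \<mu> Q s)"
    by (intro INF_greatest ret_ge_potential) (simp add: stationary_tail_bellman[OF assms])
qed

lemma ret_minimizing_kernel_stationary_tail:
  assumes "\<And>h. h \<noteq> [] \<Longrightarrow> \<mu> h = stat_pol \<pi> h" and "minimizing_kernel (V_pol \<pi>) K"
  shows "ret sig P r \<gamma> \<mu> (\<lambda>t. K) s = ereal (pexp (\<mu> [] s) (q_value (V_pol \<pi>) s))"
proof (rule antisym)
  show "ret sig P r \<gamma> \<mu> (\<lambda>t. K) s \<le> ereal (pexp (\<mu> [] s) (q_value (V_pol \<pi>) s))"
    by (rule ret_minimizing_kernel_le_potential[OF _ assms(2)]) (simp add: stationary_tail_bellman[OF assms(1)])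
  show "ereal (pexp (\<mu> [] s) (q_value (V_pol \<pi>) s)) \<le> ret sig P r \<gamma> \<mu> (\<lambda>t. K) s"
    by (rule ret_ge_potential) (simp add: stationary_tail_bellman[OF assms(1)])
qed

theorem rb_V_opt_eq: "rb_V_opt sig P r \<gamma> s = ereal (V_opt s)"
proof (rule antisym)
  show "rb_V_opt sig P r \<gamma> s \<le> ereal (V_opt s)"
    unfolding rb_V_opt_def
    by (intro SUP_least order_trans[OF robust_value_le_V_opt]) (simp add: pexp_le_const q_value_le_V_opt)
  obtain f where greedy: "greedy f"
    using greedy_exists by blast
  have "(INF Q. ret sig P r \<gamma> (det_pol f) Q s) = ereal (pexp (det_pol f [] s) (q_value V_opt s))"
    by (rule robust_value_greedy_tail[OF greedy]) simp
  also have "\<dots> = ereal (V_opt s)"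
    by (simp add: det_pol_def V_opt_greedy[OF greedy, of s, symmetric])
  finally show "ereal (V_opt s) \<le> rb_V_opt sig P r \<gamma> s"
    unfolding rb_V_opt_def by (intro SUP_upper2[of "det_pol f"]) simp_all
qed

theorem rb_Q_opt_eq: "rb_Q_opt sig P r \<gamma> s a = ereal (rs_Q_opt sig P r \<gamma> s a)"
proof (rule antisym)
  show "rb_Q_opt sig P r \<gamma> s a \<le> ereal (rs_Q_opt sig P r \<gamma> s a)"
  proof (unfold rb_Q_opt_def, rule SUP_least)
    fix \<mu> :: "('s, 'a) hpolicy"
    show "(INF Q. ret sig P r \<gamma> (force_first a \<mu>) Q s) \<le> ereal (rs_Q_opt sig P r \<gamma> s a)"
      using robust_value_le_V_opt[of "force_first a \<mu>" s]
      by (simp add: force_first_def rs_Q_opt_def q_value_def)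
  qed
  obtain f where greedy: "greedy f"
    using greedy_exists by blast
  have "(INF Q. ret sig P r \<gamma> (force_first a (det_pol f)) Q s)
      = ereal (pexp (force_first a (det_pol f) [] s) (q_value V_opt s))"
    by (rule robust_value_greedy_tail[OF greedy]) (simp add: force_first_def)
  also have "\<dots> = ereal (rs_Q_opt sig P r \<gamma> s a)"
    by (simp add: force_first_def rs_Q_opt_def q_value_def)
  finally show "ereal (rs_Q_opt sig P r \<gamma> s a) \<le> rb_Q_opt sig P r \<gamma> s a"
    unfolding rb_Q_opt_def by (intro SUP_upper2[of "det_pol f"]) simp_all
qed

theorem rb_V_pol_eq: "rb_V_pol sig P r \<gamma> \<pi> s = ereal (V_pol \<pi> s)"
  unfolding rb_V_pol_def using robust_value_stationary_tail[of "stat_pol \<pi>" \<pi> s] V_pol_fixpoint[of \<pi> s]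
  by (simp add: stat_pol_def)

theorem rb_Q_pol_eq: "rb_Q_pol sig P r \<gamma> \<pi> s a = ereal (rs_Q_pol sig P r \<gamma> \<pi> s a)"
  unfolding rb_Q_pol_def using robust_value_stationary_tail[of "force_first a (stat_pol \<pi>)" \<pi> s]
  by (simp add: force_first_def rs_Q_pol_def q_value_def)

theorem greedy_policy_optimal:
  assumes "greedy f"
  shows "(INF Q. ret sig P r \<gamma> (det_pol f) Q s) = rb_V_opt sig P r \<gamma> s"
  using robust_value_greedy_tail[OF assms, of "det_pol f" s]
  by (simp add: rb_V_opt_eq det_pol_def V_opt_greedy[OF assms, of s, symmetric])

theorem greedy_minimizing_kernel_optimal:
  assumes "greedy f" and "minimizing_kernel V_opt K"
  shows "ret sig P r \<gamma> (det_pol f) (\<lambda>t. K) s = rb_V_opt sig P r \<gamma> s"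
  using ret_minimizing_kernel_greedy_tail[OF assms(1) _ assms(2), of "det_pol f" s]
  by (simp add: rb_V_opt_eq det_pol_def V_opt_greedy[OF assms(1), of s, symmetric])

theorem minimizing_kernel_optimal:
  assumes "minimizing_kernel (V_pol \<pi>) K"
  shows "ret sig P r \<gamma> (stat_pol \<pi>) (\<lambda>t. K) s = rb_V_pol sig P r \<gamma> \<pi> s"
  using ret_minimizing_kernel_stationary_tail[OF _ assms, of "stat_pol \<pi>" s] V_pol_fixpoint[of \<pi> s]
  by (simp add: rb_V_pol_eq stat_pol_def)

end

theorem mainTheorem3:
  fixes P :: "'s::finite \<Rightarrow> 'a::finite \<Rightarrow> 's pmf"
    and sig :: "'s pmf \<Rightarrow> ('s \<Rightarrow> real) \<Rightarrow> real"
    and r :: "'s \<Rightarrow> 'a \<Rightarrow> real"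
    and \<gamma> :: real
  assumes crm: "\<forall>s a. convex_risk_measure (sig (P s a))"
    and rew: "\<forall>s a. 0 \<le> r s a \<and> r s a \<le> 1"
    and g0: "0 \<le> \<gamma>" and g1: "\<gamma> < 1"
  shows
   "(\<forall>s. rb_V_opt sig P r \<gamma> s = ereal (rs_V_opt sig P r \<gamma> s)) \<and>
    (\<forall>\<pi> s. rb_V_pol sig P r \<gamma> \<pi> s = ereal (rs_V_pol sig P r \<gamma> \<pi> s)) \<and>
    (\<forall>s a. rb_Q_opt sig P r \<gamma> s a = ereal (rs_Q_opt sig P r \<gamma> s a)) \<and>
    (\<forall>\<pi> s a. rb_Q_pol sig P r \<gamma> \<pi> s a = ereal (rs_Q_pol sig P r \<gamma> \<pi> s a)) \<and>
    (\<forall>(\<pi>s :: 's \<Rightarrow> 'a) (Ps :: 's \<Rightarrow> 'a \<Rightarrow> 's pmf).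
       (\<forall>s a'. r s a' - \<gamma> * sig (P s a') (rs_V_opt sig P r \<gamma>)
               \<le> r s (\<pi>s s) - \<gamma> * sig (P s (\<pi>s s)) (rs_V_opt sig P r \<gamma>)) \<and>
       (\<forall>s a \<mu>. penalty sig (Ps s a) (P s a) + ereal (pexp (Ps s a) (rs_V_opt sig P r \<gamma>))
               \<le> penalty sig \<mu> (P s a) + ereal (pexp \<mu> (rs_V_opt sig P r \<gamma>)))
       \<longrightarrow> (\<forall>s. (INF Q. ret sig P r \<gamma> (det_pol \<pi>s) Q s) = rb_V_opt sig P r \<gamma> s \<and>
                ret sig P r \<gamma> (det_pol \<pi>s) (\<lambda>t. Ps) s = rb_V_opt sig P r \<gamma> s)) \<and>
    (\<forall>(\<pi> :: 's \<Rightarrow> 'a pmf) (Ps :: 's \<Rightarrow> 'a \<Rightarrow> 's pmf).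
       (\<forall>s a \<mu>. penalty sig (Ps s a) (P s a) + ereal (pexp (Ps s a) (rs_V_pol sig P r \<gamma> \<pi>))
               \<le> penalty sig \<mu> (P s a) + ereal (pexp \<mu> (rs_V_pol sig P r \<gamma> \<pi>)))
       \<longrightarrow> (\<forall>s. ret sig P r \<gamma> (stat_pol \<pi>) (\<lambda>t. Ps) s = rb_V_pol sig P r \<gamma> \<pi> s))"
proof -
  interpret discounted_risk_mdp P sig r \<gamma>
    using crm g0 g1 by unfold_locales auto
  show ?thesis
    using rb_V_opt_eq rb_V_pol_eq rb_Q_opt_eq rb_Q_pol_eq
      greedy_policy_optimal greedy_minimizing_kernel_optimal minimizing_kernel_optimal
    by (auto simp: greedy_def minimizing_kernel_def q_value_def)
qed

end
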